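(* Let $s\ge2$, $\alpha>0$, and for integers $i\ge2$ let $I_i=[i,i+\alpha\log i]$. Then, as $i\to\infty$, $$\prod_{\omega\in\Omega_{I_i}}P(E_\omega^c)=i^{-\alpha\lambda_s+o(1)},\qquad \lambda_s=\frac{\Gamma^s(1/s)}{s!\,s^s}.$$
   Context: Let $A\subseteq\{1,2,\dots\}$ be a random set in which the events $\{n\in A\}$ are mutually independent with $P(n\in A)=\frac1s n^{-1+1/s}$. For a finite set $\omega$ of distinct positive integers, $E_\omega$ is the event $\{\omega\subseteq A\}$ and $E_\omega^c$ its complement $\{\omega\not\subseteq A\}$. For $\omega=\{x_1,\dots,x_r\}$ define $\sigma(\omega)=\{a_1x_1+\cdots+a_rx_r: a_1+\cdots+a_r=s,\ a_i\ge1 \text{ integers}\}$. For an interval $I$, $\Omega_I=\{\omega:\sigma(\omega)\cap I\neq\emptyset\}$. $\Gamma$ is Euler's Gamma function. *)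

theory Defs
  imports "HOL-Probability.Probability"
begin

definition incl_prob :: "nat \<Rightarrow> nat \<Rightarrow> real" where
  "incl_prob s n = (1 / real s) * real n powr (-1 + 1 / real s)"

text \<open>The random set A, encoded by its indicator f :: nat => bool (A = {n. f n}),
  with mutually independent coordinates: the product measure of Bernoulli laws.\<close>
definition rand_set_space :: "nat \<Rightarrow> (nat \<Rightarrow> bool) measure" where
  "rand_set_space s = (\<Pi>\<^sub>M n\<in>UNIV. measure_pmf (bernoulli_pmf (incl_prob s n)))"

definition prob_Ec :: "nat \<Rightarrow> nat set \<Rightarrow> real" where
  "prob_Ec s \<omega> = measure (rand_set_space s)
      {f \<in> space (rand_set_space s). \<not> (\<omega> \<subseteq> {n. f n})}"

definition sigma_set :: "nat \<Rightarrow> nat set \<Rightarrow> nat set" where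
  "sigma_set s \<omega> = {(\<Sum>x\<in>\<omega>. a x * x) | a. (\<forall>x\<in>\<omega>. a x \<ge> 1) \<and> (\<Sum>x\<in>\<omega>. a x) = s}"

definition Omega_set :: "nat \<Rightarrow> real set \<Rightarrow> nat set set" where
  "Omega_set s I = {\<omega>. finite \<omega> \<and> \<omega> \<subseteq> {1..} \<and> (real ` sigma_set s \<omega>) \<inter> I \<noteq> {}}"

definition lambda_s :: "nat \<Rightarrow> real" where
  "lambda_s s = Gamma (1 / real s) ^ s / (fact s * real s ^ s)"

end

theory Submission
  imports
    Defs
    "HOL-Computational_Algebra.Formal_Power_Series"
    "HOL-Combinatorics.Multiset_Permutations"
    "HOL-Real_Asymp.Real_Asymp"
begin

text \<open>By independence, \<open>P(E\<^sub>\<omega>\<^sup>c) = 1 - q(\<omega>)\<close> with \<open>q(\<omega>) = \<Prod>x\<in>\<omega>. P(x \<in> A)\<close>, and every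
  \<open>q(\<omega>)\<close> with \<open>\<omega> \<in> \<Omega>\<^bsub>I\<^sub>i\<^esub>\<close> is \<open>O(i powr (1/s - 1))\<close>, so \<open>-ln \<Prod> P(E\<^sub>\<omega>\<^sup>c) \<sim> \<Sum> q(\<omega>)\<close>.
  Sort the \<open>\<omega>\<close> by the integers \<open>n \<in> \<sigma>(\<omega>) \<inter> I\<^sub>i\<close>. The sets of \<open>s\<close> distinct elements with
  sum \<open>n\<close> contribute \<open>1/s!\<close> times the \<open>s\<close>-fold convolution power of \<open>p(x) = P(x \<in> A)\<close> at
  \<open>n\<close>. As \<open>p(x)\<close> is asymptotic to \<open>\<Gamma>(1/s)/s\<close> times the coefficients of \<open>(1 - z) powr (-1/s)\<close>,
  whose \<open>s\<close>-fold convolution power is identically \<open>1\<close>, this tends to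
  \<open>\<Gamma>(1/s)\<^sup>s / (s! s\<^sup>s) = \<lambda>\<^sub>s\<close>. Sets with fewer elements are dominated by shorter
  convolution powers, which tend to \<open>0\<close>. Summing over the \<open>\<sim> \<alpha> ln i\<close> integers in \<open>I\<^sub>i\<close>
  gives \<open>-ln \<Prod> P(E\<^sub>\<omega>\<^sup>c) \<sim> \<alpha> \<lambda>\<^sub>s ln i\<close>.\<close>

subsection \<open>Weighted convolutions\<close>

fun weighted_conv :: "(nat \<Rightarrow> real) \<Rightarrow> nat list \<Rightarrow> nat \<Rightarrow> real" where
  "weighted_conv f [] m = (if m = 0 then 1 else 0)"
| "weighted_conv f (a # as) m =
     (\<Sum>x\<le>m. if a * x \<le> m then f x * weighted_conv f as (m - a * x) else 0)"

definition weighted_compositions :: "nat list \<Rightarrow> nat \<Rightarrow> nat list set" where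
  "weighted_compositions as m = {xs. length xs = length as \<and> sum_list (map2 (*) as xs) = m}"

lemma weighted_compositions_member_le:
  fixes as xs :: "nat list"
  assumes "0 \<notin> set as" "length xs = length as" "y \<in> set xs"
  shows "y \<le> sum_list (map2 (*) as xs)"
  using assms
proof (induction as arbitrary: xs)
  case Nil
  then show ?case by simp
next
  case (Cons a as)
  then obtain x xs' where xs: "xs = x # xs'" by (cases xs) auto
  have "a \<noteq> 0" using Cons.prems(1) by auto
  then have "x \<le> a * x" by simp
  then show ?case using Cons xs by (auto simp: trans_le_add1 trans_le_add2)
qed

lemma finite_weighted_compositions:
  assumes "0 \<notin> set as"
  shows "finite (weighted_compositions as m)"
proof (rule finite_subset)
  show "weighted_compositions as m \<subseteq> {xs. set xs \<subseteq> {..m} \<and> length xs = length as}"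
    using weighted_compositions_member_le[OF assms] by (fastforce simp: weighted_compositions_def)
qed (rule finite_lists_length_eq, simp)

lemma weighted_compositions_Nil: "weighted_compositions [] m = (if m = 0 then {[]} else {})"
  by (auto simp: weighted_compositions_def)

lemma weighted_compositions_Cons:
  assumes "0 < a"
  shows "weighted_compositions (a # as) m =
    (\<lambda>(x, xs). x # xs) ` (SIGMA x:{x\<in>{..m}. a * x \<le> m}. weighted_compositions as (m - a * x))"
proof (intro equalityI subsetI)
  fix ys assume "ys \<in> weighted_compositions (a # as) m"
  then obtain x xs where "ys = x # xs" "length xs = length as"
      "a * x + sum_list (map2 (*) as xs) = m"
    by (cases ys) (auto simp: weighted_compositions_def)
  then show "ys \<in> (\<lambda>(x, xs). x # xs) `
      (SIGMA x:{x\<in>{..m}. a * x \<le> m}. weighted_compositions as (m - a * x))"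
    using assms by (auto simp: weighted_compositions_def image_iff intro: order.trans[of x "a * x"])
qed (auto simp: weighted_compositions_def)

lemma weighted_conv_eq_sum:
  assumes "0 \<notin> set as"
  shows "weighted_conv f as m = (\<Sum>xs\<in>weighted_compositions as m. prod_list (map f xs))"
  using assms
proof (induction as arbitrary: m)
  case Nil
  then show ?case by (simp add: weighted_compositions_Nil)
next
  case (Cons a as)
  let ?X = "{x\<in>{..m}. a * x \<le> m}"
  have a: "0 < a" using Cons.prems by (cases a) auto
  have inj: "inj_on (\<lambda>(x, xs). x # xs) (SIGMA x:?X. weighted_compositions as (m - a * x))"
    by (auto simp: inj_on_def)
  have "weighted_conv f (a # as) m = (\<Sum>x\<in>?X. f x * weighted_conv f as (m - a * x))"
    by (subst sum.inter_filter) simp_all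
  also have "\<dots> = (\<Sum>x\<in>?X. \<Sum>xs\<in>weighted_compositions as (m - a * x). f x * prod_list (map f xs))"
    using Cons by (simp add: sum_distrib_left)
  also have "\<dots> = (\<Sum>(x, xs)\<in>(SIGMA x:?X. weighted_compositions as (m - a * x)).
                     prod_list (map f (x # xs)))"
    using Cons.prems by (subst sum.Sigma) (auto simp: finite_weighted_compositions)
  also have "\<dots> = (\<Sum>xs\<in>weighted_compositions (a # as) m. prod_list (map f xs))"
    unfolding weighted_compositions_Cons[OF a] sum.reindex[OF inj] by (simp add: case_prod_unfold)
  finally show ?case .
qed

lemma weighted_conv_nonneg: "(\<And>x. 0 \<le> f x) \<Longrightarrow> 0 \<le> weighted_conv f as m"
  by (induction as arbitrary: m) (auto intro!: sum_nonneg mult_nonneg_nonneg)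

primrec conv_power :: "(nat \<Rightarrow> real) \<Rightarrow> nat \<Rightarrow> nat \<Rightarrow> real" where
  "conv_power f 0 m = (if m = 0 then 1 else 0)"
| "conv_power f (Suc k) m = (\<Sum>x\<le>m. f x * conv_power f k (m - x))"

lemma conv_power_eq_weighted_conv: "conv_power f k m = weighted_conv f (replicate k 1) m"
  by (induction k arbitrary: m) simp_all

lemma conv_power_nonneg: "(\<And>x. 0 \<le> f x) \<Longrightarrow> 0 \<le> conv_power f k m"
  by (induction k arbitrary: m) (auto intro!: sum_nonneg mult_nonneg_nonneg)

lemma conv_power_mono:
  assumes "\<And>x. 0 \<le> f x" "\<And>x. f x \<le> g x"
  shows "conv_power f k m \<le> conv_power g k m"
proof (induction k arbitrary: m)
  case (Suc k)
  show ?case unfolding conv_power.simps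
    using assms Suc conv_power_nonneg[of f, OF assms(1)]
    by (intro sum_mono mult_mono) (auto intro: order.trans)
qed simp

lemma conv_power_scale: "conv_power (\<lambda>x. r * f x) k m = r ^ k * conv_power f k m"
  by (induction k arbitrary: m) (auto simp: sum_distrib_left mult_ac)

lemma conv_power_le_scale:
  assumes "\<And>x. 0 \<le> u x" "\<And>x. u x \<le> R * c x"
  shows "conv_power u k m \<le> R ^ k * conv_power c k m"
  using conv_power_mono[of u "\<lambda>x. R * c x" k m] assms by (simp add: conv_power_scale)

lemma weighted_conv_le_conv_power:
  assumes "\<And>x. 0 \<le> f x" and "\<And>a x. a \<in> set as \<Longrightarrow> f x \<le> R * f (a * x)"
    and "0 \<notin> set as" and "0 \<le> R"
  shows "weighted_conv f as m \<le> R ^ length as * conv_power f (length as) m"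
  using assms(2,3)
proof (induction as arbitrary: m)
  case (Cons a as)
  let ?k = "length as"
  have a: "0 < a" using Cons.prems by (cases a) auto
  have "weighted_conv f (a # as) m = (\<Sum>x\<in>{x\<in>{..m}. a * x \<le> m}. f x * weighted_conv f as (m - a * x))"
    by (subst sum.inter_filter) simp_all
  also have "\<dots> \<le> (\<Sum>x\<in>{x\<in>{..m}. a * x \<le> m}. (R * f (a * x)) * (R ^ ?k * conv_power f ?k (m - a * x)))"
    using Cons assms(1,4) weighted_conv_nonneg[of f, OF assms(1)]
    by (intro sum_mono mult_mono) auto
  also have "\<dots> = R ^ Suc ?k * (\<Sum>y\<in>(\<lambda>x. a * x) ` {x\<in>{..m}. a * x \<le> m}. f y * conv_power f ?k (m - y))"
    using a by (subst sum.reindex) (auto simp: inj_on_def sum_distrib_left mult_ac)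
  also have "\<dots> \<le> R ^ Suc ?k * conv_power f (Suc ?k) m"
  proof (rule mult_left_mono)
    show "(\<Sum>y\<in>(\<lambda>x. a * x) ` {x\<in>{..m}. a * x \<le> m}. f y * conv_power f ?k (m - y))
        \<le> conv_power f (Suc ?k) m"
      using assms(1) conv_power_nonneg[of f, OF assms(1)] by (auto intro!: sum_mono2)
    show "0 \<le> R ^ Suc ?k" using assms(4) by simp
  qed
  finally show ?case by simp
qed simp

subsection \<open>Convolution powers of asymptotically equal sequences\<close>

text \<open>The part of \<open>conv_power c k m\<close> coming from the compositions
  \<open>m = x\<^sub>1 + \<dots> + x\<^sub>k\<close> in which some \<open>x\<^sub>j \<le> M\<close>.\<close>
fun conv_power_low :: "(nat \<Rightarrow> real) \<Rightarrow> nat \<Rightarrow> nat \<Rightarrow> nat \<Rightarrow> real" where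
  "conv_power_low c M 0 m = 0"
| "conv_power_low c M (Suc k) m =
     (\<Sum>x\<le>m. c x * (if x \<le> M then conv_power c k (m - x) else conv_power_low c M k (m - x)))"

lemma conv_power_low_nonneg: "(\<And>x. 0 \<le> c x) \<Longrightarrow> 0 \<le> conv_power_low c M k m"
  by (induction k arbitrary: m) (auto intro!: sum_nonneg mult_nonneg_nonneg conv_power_nonneg)

lemma sum_atMost_if_le_swap:
  "(\<Sum>x\<le>(m::nat). if x \<le> M then g x else 0) = (\<Sum>y\<le>M. if y \<le> m then g y else (0::real))"
  by (simp add: sum.inter_filter[symmetric] conj_commute)

lemma conv_power_head_low:
  "(\<Sum>x\<le>m. c x * (\<Sum>y\<le>M. if y \<le> m - x then c y * conv_power c k (m - x - y) else 0))
     = (\<Sum>y\<le>M. if y \<le> m then c y * conv_power c (Suc k) (m - y) else 0)"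
proof -
  have "(\<Sum>x\<le>m. c x * (\<Sum>y\<le>M. if y \<le> m - x then c y * conv_power c k (m - x - y) else 0))
      = (\<Sum>y\<le>M. \<Sum>x\<le>m. if y \<le> m - x then c x * (c y * conv_power c k (m - x - y)) else 0)"
    by (subst sum.swap) (auto simp: sum_distrib_left intro!: sum.cong)
  also have "\<dots> = (\<Sum>y\<le>M. if y \<le> m then c y * conv_power c (Suc k) (m - y) else 0)"
  proof (rule sum.cong[OF refl])
    fix y
    show "(\<Sum>x\<le>m. if y \<le> m - x then c x * (c y * conv_power c k (m - x - y)) else 0)
        = (if y \<le> m then c y * conv_power c (Suc k) (m - y) else 0)"
    proof (cases "y \<le> m")
      case True
      have "(\<Sum>x\<le>m. if y \<le> m - x then c x * (c y * conv_power c k (m - x - y)) else 0)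
          = (\<Sum>x\<le>m - y. c x * (c y * conv_power c k (m - y - x)))"
        using True by (subst sum.inter_filter[symmetric])
          (auto intro!: sum.cong simp: diff_commute add.commute)
      then show ?thesis using True by (simp add: sum_distrib_left mult_ac)
    qed (auto intro!: sum.neutral)
  qed
  finally show ?thesis .
qed

lemma conv_power_low_le:
  assumes c_nonneg: "\<And>x. 0 \<le> c x"
  shows "conv_power_low c M (Suc k) m
           \<le> real (Suc k) * (\<Sum>y\<le>M. if y \<le> m then c y * conv_power c k (m - y) else 0)"
proof (induction k arbitrary: m)
  case 0
  show ?case by (auto simp: sum_atMost_if_le_swap[symmetric] intro!: sum_mono)
next
  case (Suc k)
  let ?S = "\<lambda>k m. (\<Sum>y\<le>M. if y \<le> m then c y * conv_power c k (m - y) else 0)"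
  have "conv_power_low c M (Suc (Suc k)) m
      \<le> (\<Sum>x\<le>m. (if x \<le> M then c x * conv_power c (Suc k) (m - x) else 0)
                 + c x * conv_power_low c M (Suc k) (m - x))"
    unfolding conv_power_low.simps(2)[of c M "Suc k"]
    using c_nonneg conv_power_low_nonneg[of c, OF c_nonneg] conv_power_nonneg[of c, OF c_nonneg]
    by (intro sum_mono) (auto simp del: conv_power_low.simps)
  also have "\<dots> = ?S (Suc k) m + (\<Sum>x\<le>m. c x * conv_power_low c M (Suc k) (m - x))"
    by (simp add: sum.distrib sum_atMost_if_le_swap)
  also have "(\<Sum>x\<le>m. c x * conv_power_low c M (Suc k) (m - x))
      \<le> (\<Sum>x\<le>m. c x * (real (Suc k) * ?S k (m - x)))"
    using Suc c_nonneg by (intro sum_mono mult_left_mono) auto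
  also have "\<dots> = real (Suc k) * ?S (Suc k) m"
    by (simp add: conv_power_head_low[symmetric] sum_distrib_left mult_ac)
  finally show ?case by (simp add: algebra_simps)
qed

lemma conv_power_low_tendsto_zero:
  assumes "\<And>x. 0 \<le> c x" and "conv_power c k \<longlonglongrightarrow> 0"
  shows "conv_power_low c M (Suc k) \<longlonglongrightarrow> 0"
proof (rule tendsto_sandwich[OF _ _ tendsto_const])
  have "(\<lambda>m. if y \<le> m then c y * conv_power c k (m - y) else 0) \<longlonglongrightarrow> 0" for y
  proof -
    have "(\<lambda>m. c y * conv_power c k (m - y)) \<longlonglongrightarrow> c y * 0"
      by (intro tendsto_mult tendsto_const filterlim_compose[OF assms(2)]
          filterlim_minus_const_nat_at_top)
    moreover have "\<forall>\<^sub>F m in sequentially.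
        c y * conv_power c k (m - y) = (if y \<le> m then c y * conv_power c k (m - y) else 0)"
      using eventually_ge_at_top[of y] by eventually_elim simp
    ultimately show ?thesis by (simp add: tendsto_cong)
  qed
  then have "(\<lambda>m. real (Suc k) * (\<Sum>y\<le>M. if y \<le> m then c y * conv_power c k (m - y) else 0))
      \<longlonglongrightarrow> real (Suc k) * (\<Sum>y\<le>M. 0)"
    by (intro tendsto_mult tendsto_const tendsto_sum)
  then show "(\<lambda>m. real (Suc k) * (\<Sum>y\<le>M. if y \<le> m then c y * conv_power c k (m - y) else 0))
      \<longlonglongrightarrow> 0" by simp
  show "\<forall>\<^sub>F m in sequentially. 0 \<le> conv_power_low c M (Suc k) m"
    by (rule always_eventually, intro allI conv_power_low_nonneg[OF assms(1)])
  show "\<forall>\<^sub>F m in sequentially. conv_power_low c M (Suc k) m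
      \<le> real (Suc k) * (\<Sum>y\<le>M. if y \<le> m then c y * conv_power c k (m - y) else 0)"
    by (rule always_eventually, intro allI conv_power_low_le[OF assms(1)])
qed

lemma one_plus_power_le: "0 \<le> (\<delta>::real) \<Longrightarrow> \<delta> \<le> 1 \<Longrightarrow> (1 + \<delta>) ^ K \<le> 1 + 3 ^ K * \<delta>"
proof (induction K)
  case (Suc K)
  have "(1 + \<delta>) ^ Suc K \<le> (1 + \<delta>) * (1 + 3 ^ K * \<delta>)"
    using Suc by (simp add: mult_left_mono)
  also have "\<dots> = 1 + \<delta> + 3 ^ K * \<delta> + 3 ^ K * \<delta> * \<delta>" by (simp add: algebra_simps)
  also have "\<dots> \<le> 1 + 3 ^ Suc K * \<delta>"
  proof -
    have "3 ^ K * \<delta> * \<delta> \<le> 3 ^ K * \<delta>" using Suc.prems by (simp add: mult_left_le)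
    moreover have "\<delta> \<le> 3 ^ K * \<delta>" using Suc.prems by (simp add: mult_le_cancel_right1)
    moreover have "3 ^ Suc K * \<delta> = 3 * (3 ^ K * \<delta>)" by simp
    ultimately show ?thesis by linarith
  qed
  finally show ?case .
qed simp

lemma one_minus_power_ge: "0 \<le> (\<delta>::real) \<Longrightarrow> \<delta> \<le> 1 \<Longrightarrow> 1 - 3 ^ K * \<delta> \<le> (1 - \<delta>) ^ K"
proof -
  assume \<delta>: "0 \<le> \<delta>" "\<delta> \<le> 1"
  have "real K \<le> 2 ^ K"
    using less_exp[of K] by (metis less_imp_le of_nat_le_iff of_nat_numeral of_nat_power)
  also have "\<dots> \<le> 3 ^ K" by (rule power_mono) auto
  finally have "real K \<le> 3 ^ K" .
  then have "real K * \<delta> \<le> 3 ^ K * \<delta>" using \<delta> by (intro mult_right_mono) auto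
  moreover have "1 + real K * (- \<delta>) \<le> (1 + - \<delta>) ^ K" using \<delta> by (intro Bernoulli_inequality) auto
  ultimately show ?thesis by simp
qed

context
  fixes c u :: "nat \<Rightarrow> real" and M :: nat and \<delta> R :: real
  assumes c_nonneg: "\<And>x. 0 \<le> c x" and u_nonneg: "\<And>x. 0 \<le> u x"
    and u_le: "\<And>x. u x \<le> R * c x"
    and u_close: "\<And>x. M < x \<Longrightarrow> \<bar>u x - c x\<bar> \<le> \<delta> * c x"
    and \<delta>: "0 \<le> \<delta>" "\<delta> \<le> 1" "1 + \<delta> \<le> R"
begin

lemma conv_power_upper:
  "conv_power u k m \<le> (1 + \<delta>) ^ k * conv_power c k m + R ^ k * conv_power_low c M k m"
proof (induction k arbitrary: m)
  case (Suc k)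
  have R: "0 \<le> R" using \<delta> by simp
  have "u x * conv_power u k (m - x)
      \<le> (1 + \<delta>) ^ Suc k * (c x * conv_power c k (m - x)) + R ^ Suc k *
           (c x * (if x \<le> M then conv_power c k (m - x) else conv_power_low c M k (m - x)))" for x
  proof (cases "x \<le> M")
    case True
    have "u x * conv_power u k (m - x) \<le> (R * c x) * (R ^ k * conv_power c k (m - x))"
      using conv_power_le_scale[OF u_nonneg u_le] u_le u_nonneg conv_power_nonneg[OF u_nonneg]
      by (intro mult_mono) (auto intro: order.trans[OF u_nonneg u_le])
    moreover have "0 \<le> (1 + \<delta>) ^ Suc k * (c x * conv_power c k (m - x))"
      using \<delta> c_nonneg conv_power_nonneg[OF c_nonneg] by simp
    ultimately show ?thesis using True by (simp add: mult_ac)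
  next
    case False
    have "u x \<le> (1 + \<delta>) * c x" using u_close[of x] False by (simp add: algebra_simps abs_le_iff)
    then have "u x * conv_power u k (m - x) \<le> ((1 + \<delta>) * c x) *
        ((1 + \<delta>) ^ k * conv_power c k (m - x) + R ^ k * conv_power_low c M k (m - x))"
      using Suc \<delta> c_nonneg u_nonneg conv_power_nonneg[OF u_nonneg] by (intro mult_mono) auto
    also have "\<dots> = (1 + \<delta>) ^ Suc k * (c x * conv_power c k (m - x))
        + (1 + \<delta>) * (R ^ k * (c x * conv_power_low c M k (m - x)))"
      by (simp add: algebra_simps)
    also have "(1 + \<delta>) * (R ^ k * (c x * conv_power_low c M k (m - x)))
        \<le> R * (R ^ k * (c x * conv_power_low c M k (m - x)))"
      using \<delta> R c_nonneg conv_power_low_nonneg[OF c_nonneg] by (intro mult_right_mono) auto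
    finally show ?thesis using False by (simp add: mult_ac)
  qed
  then have "conv_power u (Suc k) m \<le> (\<Sum>x\<le>m. (1 + \<delta>) ^ Suc k * (c x * conv_power c k (m - x))
      + R ^ Suc k * (c x * (if x \<le> M then conv_power c k (m - x) else conv_power_low c M k (m - x))))"
    by (simp only: conv_power.simps sum_mono)
  then show ?case by (simp add: sum.distrib sum_distrib_left)
qed simp

lemma conv_power_lower:
  "(1 - \<delta>) ^ k * (conv_power c k m - conv_power_low c M k m) \<le> conv_power u k m"
proof (induction k arbitrary: m)
  case (Suc k)
  have "(1 - \<delta>) ^ Suc k * (c x * conv_power c k (m - x) - c x *
          (if x \<le> M then conv_power c k (m - x) else conv_power_low c M k (m - x)))
        \<le> u x * conv_power u k (m - x)" for x
  proof (cases "x \<le> M")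
    case True
    then show ?thesis using u_nonneg conv_power_nonneg[OF u_nonneg] by simp
  next
    case False
    have "(1 - \<delta>) ^ Suc k * (c x * conv_power c k (m - x) - c x * conv_power_low c M k (m - x))
        = ((1 - \<delta>) * c x) * ((1 - \<delta>) ^ k * (conv_power c k (m - x) - conv_power_low c M k (m - x)))"
      by (simp add: algebra_simps)
    also have "\<dots> \<le> ((1 - \<delta>) * c x) * conv_power u k (m - x)"
      using Suc \<delta> c_nonneg by (intro mult_left_mono) auto
    also have "\<dots> \<le> u x * conv_power u k (m - x)"
      using u_close[of x] False conv_power_nonneg[OF u_nonneg]
      by (intro mult_right_mono) (auto simp: algebra_simps abs_le_iff)
    finally show ?thesis using False by simp
  qed
  then have "(\<Sum>x\<le>m. (1 - \<delta>) ^ Suc k * (c x * conv_power c k (m - x) - c x *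
          (if x \<le> M then conv_power c k (m - x) else conv_power_low c M k (m - x))))
      \<le> conv_power u (Suc k) m"
    by (simp only: conv_power.simps sum_mono)
  then show ?case by (simp add: sum_subtractf sum_distrib_left right_diff_distrib)
qed simp


lemma conv_power_close_to_one:
  assumes "conv_power c k m = 1"
  shows "\<bar>conv_power u k m - 1\<bar> \<le> 3 ^ k * \<delta> + R ^ k * conv_power_low c M k m"
proof -
  have low: "0 \<le> conv_power_low c M k m" by (rule conv_power_low_nonneg[OF c_nonneg])
  have "1 \<le> R ^ k" using \<delta> by (intro one_le_power) auto
  then have "conv_power_low c M k m \<le> R ^ k * conv_power_low c M k m"
    using mult_right_mono[OF _ low, of 1] by simp
  moreover have "(1 - \<delta>) ^ k * conv_power_low c M k m \<le> conv_power_low c M k m"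
    using \<delta> low by (intro mult_left_le_one_le power_le_one) auto
  moreover have "(1 - \<delta>) ^ k * (1 - conv_power_low c M k m)
      = (1 - \<delta>) ^ k - (1 - \<delta>) ^ k * conv_power_low c M k m"
    by (simp add: right_diff_distrib)
  ultimately show ?thesis
    using conv_power_upper[of k m] conv_power_lower[of k m] assms
      one_plus_power_le[OF \<delta>(1,2), of k] one_minus_power_ge[OF \<delta>(1,2), of k]
    by (simp only: abs_le_iff mult_1_right) linarith
qed

end

lemma ratio_tendsto_imp_le_scale:
  fixes c u :: "nat \<Rightarrow> real"
  assumes "\<And>x. 0 < c x" and "(\<lambda>x. u x / c x) \<longlonglongrightarrow> L"
  obtains R where "\<And>x. u x \<le> R * c x"
proof -
  have "Bseq (\<lambda>x. u x / c x)" using assms(2) by (rule convergent_imp_Bseq[OF convergentI])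
  then obtain R where R: "\<And>x. norm (u x / c x) \<le> R" unfolding Bseq_def by blast
  have "\<bar>u x\<bar> \<le> R * c x" for x
  proof -
    have "\<bar>u x\<bar> / c x \<le> R" using R[of x] assms(1)[of x] by (simp add: abs_div abs_of_pos)
    then show ?thesis using assms(1)[of x] by (simp add: pos_divide_le_eq)
  qed
  then have "u x \<le> R * c x" for x by (meson abs_ge_self order.trans)
  then show thesis by (rule that)
qed

lemma ratio_tendsto_one_imp_close:
  fixes c u :: "nat \<Rightarrow> real"
  assumes "\<And>x. 0 < c x" and "(\<lambda>x. u x / c x) \<longlonglongrightarrow> 1" and "0 < \<delta>"
  obtains M where "\<And>x. M < x \<Longrightarrow> \<bar>u x - c x\<bar> \<le> \<delta> * c x"
proof -
  obtain M where M: "\<And>x. M \<le> x \<Longrightarrow> \<bar>u x / c x - 1\<bar> < \<delta>"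
    using LIMSEQ_D[OF assms(2,3)] by auto
  have "\<bar>u x - c x\<bar> \<le> \<delta> * c x" if "M < x" for x
  proof -
    have "u x / c x - 1 = (u x - c x) / c x"
      using assms(1)[of x] by (simp add: field_simps)
    then have "\<bar>u x / c x - 1\<bar> = \<bar>u x - c x\<bar> / c x"
      using assms(1)[of x] by (simp add: abs_div abs_of_pos)
    then show ?thesis using M[of x] that assms(1)[of x] by (simp add: divide_less_eq)
  qed
  then show thesis by (rule that)
qed

lemma conv_power_tendsto_zero:
  fixes c u :: "nat \<Rightarrow> real"
  assumes "\<And>x. 0 < c x" "\<And>x. 0 \<le> u x" "(\<lambda>x. u x / c x) \<longlonglongrightarrow> L"
    and "conv_power c k \<longlonglongrightarrow> 0"
  shows "conv_power u k \<longlonglongrightarrow> 0"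
proof -
  obtain R where R: "\<And>x. u x \<le> R * c x" using ratio_tendsto_imp_le_scale[OF assms(1,3)] by blast
  show ?thesis
  proof (rule tendsto_sandwich[OF _ _ tendsto_const])
    show "\<forall>\<^sub>F m in sequentially. 0 \<le> conv_power u k m"
      using conv_power_nonneg[OF assms(2)] by simp
    show "\<forall>\<^sub>F m in sequentially. conv_power u k m \<le> R ^ k * conv_power c k m"
      using conv_power_le_scale[OF assms(2) R] by simp
    show "(\<lambda>m. R ^ k * conv_power c k m) \<longlonglongrightarrow> 0"
      using tendsto_mult[OF tendsto_const assms(4), of "R ^ k"] by simp
  qed
qed

text \<open>Compositions with a part \<open>\<le> M\<close> are negligible, and on the others \<open>u\<close> and \<open>c\<close>
  agree up to a factor \<open>1 \<plusminus> \<delta>\<close> in each part.\<close>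
lemma conv_power_tendsto_one:
  fixes c u :: "nat \<Rightarrow> real"
  assumes c_pos: "\<And>x. 0 < c x" and u_nonneg: "\<And>x. 0 \<le> u x"
    and ratio: "(\<lambda>x. u x / c x) \<longlonglongrightarrow> 1"
    and one: "\<And>m. conv_power c (Suc k) m = 1" and zero: "conv_power c k \<longlonglongrightarrow> 0"
  shows "conv_power u (Suc k) \<longlonglongrightarrow> 1"
proof (rule LIMSEQ_I)
  fix r :: real assume r: "r > 0"
  define \<delta> where "\<delta> = min 1 (r / (2 * 3 ^ Suc k))"
  have \<delta>: "0 < \<delta>" "\<delta> \<le> 1" "3 ^ Suc k * \<delta> \<le> r / 2"
    using r by (auto simp: \<delta>_def field_simps min_def)
  have c_nonneg: "\<And>x. 0 \<le> c x" using c_pos less_imp_le by blast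
  obtain R0 where R0: "\<And>x. u x \<le> R0 * c x"
    using ratio_tendsto_imp_le_scale[OF c_pos ratio] by blast
  define R where "R = max R0 (1 + \<delta>)"
  have R: "\<And>x. u x \<le> R * c x" "1 + \<delta> \<le> R"
    using R0 order.trans[OF R0 mult_right_mono[OF max.cobounded1 c_nonneg]] by (auto simp: R_def)
  obtain M where M: "\<And>x. M < x \<Longrightarrow> \<bar>u x - c x\<bar> \<le> \<delta> * c x"
    using ratio_tendsto_one_imp_close[OF c_pos ratio \<delta>(1)] by blast
  have "(\<lambda>m. R ^ Suc k * conv_power_low c M (Suc k) m) \<longlonglongrightarrow> R ^ Suc k * 0"
    by (intro tendsto_mult tendsto_const conv_power_low_tendsto_zero c_nonneg zero)
  then have "\<forall>\<^sub>F m in sequentially. R ^ Suc k * conv_power_low c M (Suc k) m < r / 2"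
    using r by (intro order_tendstoD(2)) auto
  then have "\<forall>\<^sub>F m in sequentially. \<bar>conv_power u (Suc k) m - 1\<bar> < r"
  proof eventually_elim
    case (elim m)
    have "\<bar>conv_power u (Suc k) m - 1\<bar> \<le> 3 ^ Suc k * \<delta> + R ^ Suc k * conv_power_low c M (Suc k) m"
      by (rule conv_power_close_to_one[OF c_nonneg u_nonneg R(1) M _ _ R(2) one]) (use \<delta> in auto)
    then show ?case using elim \<delta>(3) by linarith
  qed
  then show "\<exists>N. \<forall>m\<ge>N. norm (conv_power u (Suc k) m - 1) < r"
    by (simp add: eventually_sequentially)
qed

subsection \<open>Coefficients of \<open>(1 - z) powr (-b)\<close>\<close>

definition negbinom_coeff :: "real \<Rightarrow> nat \<Rightarrow> real" where
  "negbinom_coeff b n = pochhammer b n / fact n"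

lemma negbinom_coeff_pos: "0 < b \<Longrightarrow> 0 < negbinom_coeff b n"
  unfolding negbinom_coeff_def by (auto intro!: divide_pos_pos pochhammer_pos)

lemma negbinom_coeff_gbinomial: "negbinom_coeff b n = (-1) ^ n * ((- b) gchoose n)"
  unfolding negbinom_coeff_def gbinomial_pochhammer by simp

lemma negbinom_coeff_conv:
  "(\<Sum>x\<le>m. negbinom_coeff a x * negbinom_coeff b (m - x)) = negbinom_coeff (a + b) m"
proof -
  have "negbinom_coeff a x * negbinom_coeff b (m - x) = (-1) ^ m * ((- a) gchoose x) * ((- b) gchoose (m - x))"
    if "x \<le> m" for x
  proof -
    have "(-1 :: real) ^ x * (-1) ^ (m - x) = (-1) ^ m" using that by (simp flip: power_add)
    then show ?thesis unfolding negbinom_coeff_gbinomial by (metis mult.assoc mult.left_commute)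
  qed
  then have "(\<Sum>x\<le>m. negbinom_coeff a x * negbinom_coeff b (m - x))
      = (-1) ^ m * (\<Sum>x\<le>m. ((- a) gchoose x) * ((- b) gchoose (m - x)))"
    by (simp add: sum_distrib_left mult.assoc)
  also have "\<dots> = negbinom_coeff (a + b) m"
    using gbinomial_Vandermonde[of "- a" "- b" m] by (simp add: atLeast0AtMost negbinom_coeff_gbinomial)
  finally show ?thesis .
qed

lemma conv_power_negbinom_coeff:
  "conv_power (negbinom_coeff b) k m = negbinom_coeff (real k * b) m"
proof (induction k arbitrary: m)
  case 0
  then show ?case by (simp add: negbinom_coeff_def pochhammer_0_left)
next
  case (Suc k)
  then show ?case by (simp add: negbinom_coeff_conv algebra_simps)
qed

lemma negbinom_coeff_one: "negbinom_coeff 1 m = 1"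
  by (simp add: negbinom_coeff_def pochhammer_fact[symmetric])

lemma negbinom_coeff_Suc_eq:
  assumes "0 < b" "0 < n"
  shows "negbinom_coeff b (Suc n) = real n powr b / (Gamma_series b n * real (Suc n))"
proof -
  have pos: "pochhammer b (Suc n) > 0" "real n powr b > 0"
    using assms by (auto intro: pochhammer_pos)
  have GS: "Gamma_series b n = fact n * real n powr b / pochhammer b (Suc n)"
    using assms by (simp add: Gamma_series_def powr_def)
  have "real n powr b / (Gamma_series b n * real (Suc n))
      = real n powr b / (fact n * real (Suc n) * real n powr b / pochhammer b (Suc n))"
    unfolding GS by (simp add: mult_ac)
  also have "\<dots> = pochhammer b (Suc n) / (fact n * real (Suc n))"
    using pos by simp
  finally show ?thesis by (simp add: negbinom_coeff_def mult.commute)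
qed

text \<open>Gauss's product formula for \<open>\<Gamma>\<close>, read as an asymptotic for the coefficients.\<close>
lemma power_div_negbinom_coeff_tendsto:
  assumes b: "0 < b"
  shows "(\<lambda>n. real n powr (b - 1) / negbinom_coeff b n) \<longlonglongrightarrow> Gamma b"
proof (rule LIMSEQ_imp_Suc)
  have "(\<lambda>n. real (Suc n) powr b / real n powr b * Gamma_series b n) \<longlonglongrightarrow> 1 * Gamma b"
  proof (intro tendsto_mult Gamma_series_LIMSEQ)
    show "(\<lambda>n. real (Suc n) powr b / real n powr b) \<longlonglongrightarrow> 1" using b by real_asymp
  qed
  moreover have "\<forall>\<^sub>F n in sequentially. real (Suc n) powr b / real n powr b * Gamma_series b n
      = real (Suc n) powr (b - 1) / negbinom_coeff b (Suc n)"
    using eventually_gt_at_top[of 0]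
  proof eventually_elim
    case (elim n)
    have "0 < real n powr b" using elim by simp
    moreover have "real (Suc n) powr b = real (Suc n) powr (b - 1) * real (Suc n)"
      by (simp add: powr_diff)
    ultimately show ?case by (simp add: negbinom_coeff_Suc_eq[OF b elim] field_simps)
  qed
  ultimately show "(\<lambda>n. real (Suc n) powr (b - 1) / negbinom_coeff b (Suc n)) \<longlonglongrightarrow> Gamma b"
    by (simp add: tendsto_cong)
qed

lemma negbinom_coeff_tendsto_zero:
  assumes "0 < b" "b < 1"
  shows "negbinom_coeff b \<longlonglongrightarrow> 0"
proof (rule LIMSEQ_imp_Suc)
  have "Gamma b > 0" using assms by simp
  then have "(\<lambda>n. real n powr b / real (Suc n) * inverse (Gamma_series b n)) \<longlonglongrightarrow> 0 * inverse (Gamma b)"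
  proof (intro tendsto_mult tendsto_inverse Gamma_series_LIMSEQ)
    show "(\<lambda>n. real n powr b / real (Suc n)) \<longlonglongrightarrow> 0" using assms by real_asymp
  qed auto
  moreover have "\<forall>\<^sub>F n in sequentially.
      real n powr b / real (Suc n) * inverse (Gamma_series b n) = negbinom_coeff b (Suc n)"
    using eventually_gt_at_top[of 0]
    by eventually_elim (use assms in \<open>simp add: negbinom_coeff_Suc_eq field_simps\<close>)
  ultimately show "(\<lambda>n. negbinom_coeff b (Suc n)) \<longlonglongrightarrow> 0" by (simp add: tendsto_cong)
qed

lemma conv_power_negbinom_coeff_tendsto_zero:
  assumes "k < s"
  shows "conv_power (negbinom_coeff (1 / real s)) k \<longlonglongrightarrow> 0"
proof (cases "k = 0")
  case True
  have "\<forall>\<^sub>F m in sequentially. 0 = conv_power (negbinom_coeff (1 / real s)) k m"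
    using eventually_gt_at_top[of 0] by eventually_elim (simp add: True)
  then show ?thesis by (simp add: tendsto_cong)
next
  case False
  then show ?thesis unfolding conv_power_negbinom_coeff
    using assms by (intro negbinom_coeff_tendsto_zero) (auto simp: field_simps)
qed

lemma incl_prob_div_negbinom_coeff_tendsto:
  assumes "0 < s"
  shows "(\<lambda>x. incl_prob s x / negbinom_coeff (1 / real s) x) \<longlonglongrightarrow> Gamma (1 / real s) / real s"
proof -
  have "(\<lambda>x. real x powr (1 / real s - 1) / negbinom_coeff (1 / real s) x / real s)
      \<longlonglongrightarrow> Gamma (1 / real s) / real s"
    using assms by (intro tendsto_divide power_div_negbinom_coeff_tendsto tendsto_const) auto
  then show ?thesis by (simp add: incl_prob_def field_simps)
qed

lemma conv_power_incl_prob_tendsto: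
  assumes "0 < s"
  shows "conv_power (incl_prob s) s \<longlonglongrightarrow> (Gamma (1 / real s) / real s) ^ s"
proof -
  define \<gamma> where "\<gamma> = Gamma (1 / real s) / real s"
  have \<gamma>: "0 < \<gamma>" using assms by (simp add: \<gamma>_def)
  obtain k where k: "s = Suc k" using assms by (cases s) auto
  have "conv_power (\<lambda>x. incl_prob s x / \<gamma>) (Suc k) \<longlonglongrightarrow> 1"
  proof (rule conv_power_tendsto_one)
    show "\<And>x. 0 < negbinom_coeff (1 / real s) x" using assms by (simp add: negbinom_coeff_pos)
    show "\<And>x. 0 \<le> incl_prob s x / \<gamma>" using \<gamma> by (simp add: incl_prob_def)
    have "(\<lambda>x. incl_prob s x / negbinom_coeff (1 / real s) x / \<gamma>) \<longlonglongrightarrow> \<gamma> / \<gamma>"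
      using incl_prob_div_negbinom_coeff_tendsto[OF assms, folded \<gamma>_def] \<gamma>
      by (intro tendsto_divide tendsto_const) auto
    then show "(\<lambda>x. incl_prob s x / \<gamma> / negbinom_coeff (1 / real s) x) \<longlonglongrightarrow> 1"
      using \<gamma> by (simp add: field_simps)
    show "\<And>m. conv_power (negbinom_coeff (1 / real s)) (Suc k) m = 1"
      unfolding conv_power_negbinom_coeff using k by (simp add: negbinom_coeff_one del: of_nat_Suc)
    show "conv_power (negbinom_coeff (1 / real s)) k \<longlonglongrightarrow> 0"
      using k by (intro conv_power_negbinom_coeff_tendsto_zero) simp
  qed
  then have "conv_power (\<lambda>x. incl_prob s x / \<gamma>) s \<longlonglongrightarrow> 1" by (simp only: k)
  then have "(\<lambda>m. \<gamma> ^ s * conv_power (\<lambda>x. incl_prob s x / \<gamma>) s m) \<longlonglongrightarrow> \<gamma> ^ s * 1"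
    by (intro tendsto_mult tendsto_const)
  moreover have "\<gamma> ^ s * conv_power (\<lambda>x. incl_prob s x / \<gamma>) s m = conv_power (incl_prob s) s m" for m
    using conv_power_scale[of \<gamma> "\<lambda>x. incl_prob s x / \<gamma>" s m] \<gamma> by simp
  ultimately show ?thesis by (simp add: \<gamma>_def)
qed

lemma conv_power_incl_prob_tendsto_zero:
  assumes "k < s"
  shows "conv_power (incl_prob s) k \<longlonglongrightarrow> 0"
proof (rule conv_power_tendsto_zero)
  show "\<And>x. 0 < negbinom_coeff (1 / real s) x" using assms by (simp add: negbinom_coeff_pos)
  show "\<And>x. 0 \<le> incl_prob s x" by (simp add: incl_prob_def)
  show "(\<lambda>x. incl_prob s x / negbinom_coeff (1 / real s) x) \<longlonglongrightarrow> Gamma (1 / real s) / real s"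
    using assms by (intro incl_prob_div_negbinom_coeff_tendsto) simp
  show "conv_power (negbinom_coeff (1 / real s)) k \<longlonglongrightarrow> 0"
    using assms by (rule conv_power_negbinom_coeff_tendsto_zero)
qed

subsection \<open>Sets \<open>\<omega>\<close> with \<open>n \<in> \<sigma>(\<omega>)\<close>\<close>

definition prob_E :: "nat \<Rightarrow> nat set \<Rightarrow> real" where
  "prob_E s \<omega> = (\<Prod>x\<in>\<omega>. incl_prob s x)"

definition Omega_at :: "nat \<Rightarrow> nat \<Rightarrow> nat set set" where
  "Omega_at s n = {\<omega>. finite \<omega> \<and> \<omega> \<subseteq> {1..} \<and> n \<in> sigma_set s \<omega>}"

definition distinct_partitions :: "nat \<Rightarrow> nat \<Rightarrow> nat set set" where
  "distinct_partitions k n = {\<omega>. finite \<omega> \<and> \<omega> \<subseteq> {1..} \<and> card \<omega> = k \<and> (\<Sum>x\<in>\<omega>. x) = n}"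

lemma Omega_atE:
  assumes "\<omega> \<in> Omega_at s n"
  obtains a where "finite \<omega>" "\<omega> \<subseteq> {1..}" "\<forall>x\<in>\<omega>. 1 \<le> a x"
    "(\<Sum>x\<in>\<omega>. a x) = s" "(\<Sum>x\<in>\<omega>. a x * x) = n"
  using assms unfolding Omega_at_def sigma_set_def by blast

lemma Omega_at_card_le: "\<omega> \<in> Omega_at s n \<Longrightarrow> card \<omega> \<le> s"
proof (elim Omega_atE)
  fix a assume "\<forall>x\<in>\<omega>. 1 \<le> a x" "(\<Sum>x\<in>\<omega>. a x) = s"
  then show "card \<omega> \<le> s" using sum_mono[of \<omega> "\<lambda>_. 1" a] by simp
qed

lemma Omega_at_subset: "\<omega> \<in> Omega_at s n \<Longrightarrow> \<omega> \<subseteq> {1..n}"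
proof (elim Omega_atE)
  fix a assume a: "finite \<omega>" "\<omega> \<subseteq> {1..}" "\<forall>x\<in>\<omega>. 1 \<le> a x" "(\<Sum>x\<in>\<omega>. a x * x) = n"
  have "x \<le> n" if "x \<in> \<omega>" for x
  proof -
    have "x \<le> a x * x" using a(3) that by simp
    also have "\<dots> \<le> n" using a(1,4) that member_le_sum[of x \<omega> "\<lambda>x. a x * x"] by simp
    finally show ?thesis .
  qed
  then show "\<omega> \<subseteq> {1..n}" using a(2) by auto
qed

lemma finite_Omega_at: "finite (Omega_at s n)"
proof (rule finite_subset)
  show "Omega_at s n \<subseteq> Pow {1..n}" using Omega_at_subset by blast
qed simp

lemma Omega_at_card_eq: "{\<omega> \<in> Omega_at s n. card \<omega> = s} = distinct_partitions s n"
proof (intro equalityI subsetI)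
  fix \<omega> assume "\<omega> \<in> {\<omega> \<in> Omega_at s n. card \<omega> = s}"
  then obtain a where a: "finite \<omega>" "\<omega> \<subseteq> {1..}" "\<forall>x\<in>\<omega>. 1 \<le> a x"
      "(\<Sum>x\<in>\<omega>. a x) = s" "(\<Sum>x\<in>\<omega>. a x * x) = n" and card: "card \<omega> = s"
    by (auto elim: Omega_atE)
  have "(\<Sum>x\<in>\<omega>. a x - 1) = 0"
    using a(3,4) card by (simp add: sum_subtractf_nat)
  then have "\<forall>x\<in>\<omega>. a x = 1" using a(1,3) by fastforce
  then show "\<omega> \<in> distinct_partitions s n"
    using a(1,2,5) card by (simp add: distinct_partitions_def)
next
  fix \<omega> assume "\<omega> \<in> distinct_partitions s n"
  then show "\<omega> \<in> {\<omega> \<in> Omega_at s n. card \<omega> = s}"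
    unfolding Omega_at_def distinct_partitions_def sigma_set_def
    by (auto intro!: exI[of _ "\<lambda>_. 1"])
qed

lemma finite_distinct_partitions: "finite (distinct_partitions s n)"
  using finite_Omega_at[of s n] by (simp flip: Omega_at_card_eq)

lemma finite_compositions: "finite {xs :: nat list. length xs = k \<and> sum_list xs = n}"
  by (rule finite_subset[OF _ finite_lists_length_eq[of "{..n}" k]])
    (auto simp: member_le_sum_list)

lemma conv_power_eq_sum_compositions:
  "conv_power f k n = (\<Sum>xs | length xs = k \<and> sum_list xs = n. prod_list (map f xs))"
proof -
  have "map2 (*) (replicate k 1) xs = xs" if "length xs = k" for xs :: "nat list"
    using that by (induction xs arbitrary: k) (auto simp: length_Suc_conv)
  then have "weighted_compositions (replicate k 1) n = {xs. length xs = k \<and> sum_list xs = n}"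
    by (auto simp: weighted_compositions_def)
  then show ?thesis by (simp add: conv_power_eq_weighted_conv weighted_conv_eq_sum)
qed

lemma fact_mult_sum_distinct_partitions:
  fixes f :: "nat \<Rightarrow> real"
  assumes "f 0 = 0"
  shows "fact k * (\<Sum>\<omega>\<in>distinct_partitions k n. \<Prod>x\<in>\<omega>. f x)
    = (\<Sum>xs | length xs = k \<and> sum_list xs = n \<and> distinct xs. prod_list (map f xs))"
proof -
  let ?A = "{xs. length xs = k \<and> sum_list xs = n \<and> distinct xs}"
  let ?B = "{xs \<in> ?A. 0 \<notin> set xs}"
  have "finite ?A" by (rule finite_subset[OF _ finite_compositions[of k n]]) auto
  then have "(\<Sum>xs\<in>?A. prod_list (map f xs)) = (\<Sum>xs\<in>?B. prod_list (map f xs))"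
    using assms by (intro sum.mono_neutral_right) (auto simp: prod_list_zero_iff)
  also have "?B = (\<Union>\<omega>\<in>distinct_partitions k n. permutations_of_set \<omega>)"
  proof (intro equalityI subsetI)
    fix xs assume xs: "xs \<in> ?B"
    then have "set xs \<in> distinct_partitions k n"
      by (auto simp: distinct_partitions_def distinct_card distinct_sum_list_conv_Sum
          Suc_le_eq intro!: gr0I)
    then show "xs \<in> (\<Union>\<omega>\<in>distinct_partitions k n. permutations_of_set \<omega>)"
      using xs by (auto simp: permutations_of_set_def)
  qed (auto simp: permutations_of_set_def distinct_partitions_def distinct_card[symmetric]
      distinct_sum_list_conv_Sum)
  also have "(\<Sum>xs\<in>(\<Union>\<omega>\<in>distinct_partitions k n. permutations_of_set \<omega>). prod_list (map f xs))
      = (\<Sum>\<omega>\<in>distinct_partitions k n. \<Sum>xs\<in>permutations_of_set \<omega>. prod_list (map f xs))"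
  proof (rule sum.UNION_disjoint)
    show "finite (distinct_partitions k n)" by (rule finite_distinct_partitions)
    show "\<forall>\<omega>\<in>distinct_partitions k n. finite (permutations_of_set \<omega>)"
      by (simp add: distinct_partitions_def)
  qed (auto simp: permutations_of_set_def)
  also have "\<dots> = (\<Sum>\<omega>\<in>distinct_partitions k n. fact k * (\<Prod>x\<in>\<omega>. f x))"
  proof (rule sum.cong[OF refl])
    fix \<omega> assume \<omega>: "\<omega> \<in> distinct_partitions k n"
    have "(\<Sum>xs\<in>permutations_of_set \<omega>. prod_list (map f xs)) = (\<Sum>xs\<in>permutations_of_set \<omega>. \<Prod>x\<in>\<omega>. f x)"
      by (intro sum.cong) (auto simp: permutations_of_set_def prod.distinct_set_conv_list)
    then show "(\<Sum>xs\<in>permutations_of_set \<omega>. prod_list (map f xs)) = fact k * (\<Prod>x\<in>\<omega>. f x)"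
      using \<omega> by (simp add: distinct_partitions_def)
  qed
  finally show ?thesis by (simp add: sum_distrib_left)
qed

lemma prod_list_le_prod_set:
  fixes f :: "'a \<Rightarrow> real"
  assumes "\<And>x. 0 \<le> f x" "\<And>x. f x \<le> 1"
  shows "prod_list (map f xs) \<le> (\<Prod>x\<in>set xs. f x)"
proof (induction xs)
  case (Cons x xs)
  have P: "0 \<le> prod_list (map f xs)" using assms by (induction xs) auto
  show ?case
  proof (cases "x \<in> set xs")
    case True
    have "f x * prod_list (map f xs) \<le> prod_list (map f xs)"
      using P assms by (intro mult_left_le_one_le) auto
    then show ?thesis using Cons True by (simp add: insert_absorb)
  next
    case False
    then show ?thesis using Cons assms by (auto intro: mult_left_mono)
  qed
qed simp

lemma composition_set_mem_Omega_at:
  assumes "length xs = s" "sum_list xs = n" "0 \<notin> set xs"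
  shows "set xs \<in> Omega_at s n"
proof -
  have "n \<in> sigma_set s (set xs)"
    unfolding sigma_set_def
  proof (intro CollectI exI[of _ "count_list xs"] conjI ballI)
    show "(\<Sum>x\<in>set xs. count_list xs x) = s" using assms(1) by (simp add: sum_count_set)
    show "n = (\<Sum>x\<in>set xs. count_list xs x * x)"
      using assms(2) sum_list_map_eq_sum_count[of "\<lambda>x. x" xs] by simp
  qed (metis One_nat_def Suc_leI count_list_0_iff gr0I)
  moreover have "set xs \<subseteq> {1..}" using assms(3) by (auto simp: Suc_le_eq intro!: gr0I)
  ultimately show ?thesis by (simp add: Omega_at_def)
qed

lemma card_lists_with_set_le:
  assumes "finite \<omega>" "card \<omega> \<le> s"
  shows "card {xs. length xs = s \<and> set xs = \<omega>} \<le> s ^ s"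
proof -
  have "card {xs. length xs = s \<and> set xs = \<omega>} \<le> card {xs. set xs \<subseteq> \<omega> \<and> length xs = s}"
    using assms(1) by (intro card_mono finite_lists_length_eq) auto
  also have "\<dots> = card \<omega> ^ s" using assms(1) by (simp add: card_lists_length_eq)
  also have "\<dots> \<le> s ^ s" using assms(2) by (rule power_mono) simp
  finally show ?thesis .
qed

lemma sum_nondistinct_compositions_le:
  fixes f :: "nat \<Rightarrow> real"
  assumes f0: "f 0 = 0" and f_nonneg: "\<And>x. 0 \<le> f x" and f_le_one: "\<And>x. f x \<le> 1"
  shows "(\<Sum>xs | length xs = s \<and> sum_list xs = n \<and> \<not> distinct xs. prod_list (map f xs))
     \<le> real (s ^ s) * (\<Sum>\<omega>\<in>{\<omega> \<in> Omega_at s n. card \<omega> < s}. \<Prod>x\<in>\<omega>. f x)"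
proof -
  let ?B = "{xs. length xs = s \<and> sum_list xs = n \<and> \<not> distinct xs}"
  let ?C = "{xs \<in> ?B. 0 \<notin> set xs}"
  let ?O = "{\<omega> \<in> Omega_at s n. card \<omega> < s}"
  have fin_B: "finite ?B" by (rule finite_subset[OF _ finite_compositions[of s n]]) auto
  then have fin_C: "finite ?C" by (rule finite_subset[rotated]) auto
  have set_C: "set xs \<in> ?O" if "xs \<in> ?C" for xs
    using that composition_set_mem_Omega_at[of xs s n] card_distinct[of xs] card_length[of xs]
    by (auto simp: order_less_le)
  have "(\<Sum>xs\<in>?B. prod_list (map f xs)) = (\<Sum>xs\<in>?C. prod_list (map f xs))"
    using fin_B f0 by (intro sum.mono_neutral_right) (auto simp: prod_list_zero_iff)
  also have "\<dots> \<le> (\<Sum>xs\<in>?C. \<Prod>x\<in>set xs. f x)"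
    using f_nonneg f_le_one by (intro sum_mono prod_list_le_prod_set)
  also have "\<dots> = (\<Sum>\<omega>\<in>set ` ?C. \<Sum>xs | xs \<in> ?C \<and> set xs = \<omega>. \<Prod>x\<in>\<omega>. f x)"
    by (subst sum.image_gen[OF fin_C]) (auto intro!: sum.cong)
  also have "\<dots> \<le> (\<Sum>\<omega>\<in>set ` ?C. real (s ^ s) * (\<Prod>x\<in>\<omega>. f x))"
  proof (rule sum_mono)
    fix \<omega> assume "\<omega> \<in> set ` ?C"
    then have \<omega>: "\<omega> \<in> ?O" using set_C by blast
    have "finite {xs. length xs = s \<and> set xs = \<omega>}"
      using \<omega> by (intro finite_subset[OF _ finite_lists_length_eq[of \<omega> s]]) (auto simp: Omega_at_def)
    then have "card {xs. xs \<in> ?C \<and> set xs = \<omega>} \<le> card {xs. length xs = s \<and> set xs = \<omega>}"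
      by (rule card_mono) auto
    also have "\<dots> \<le> s ^ s"
      using \<omega> by (intro card_lists_with_set_le) (auto simp: Omega_at_def)
    finally show "(\<Sum>xs | xs \<in> ?C \<and> set xs = \<omega>. \<Prod>x\<in>\<omega>. f x) \<le> real (s ^ s) * (\<Prod>x\<in>\<omega>. f x)"
      using f_nonneg by (simp add: mult_right_mono prod_nonneg flip: of_nat_le_iff)
  qed
  also have "\<dots> \<le> (\<Sum>\<omega>\<in>?O. real (s ^ s) * (\<Prod>x\<in>\<omega>. f x))"
    using set_C f_nonneg finite_Omega_at[of s n]
    by (intro sum_mono2) (auto intro!: mult_nonneg_nonneg prod_nonneg)
  finally show ?thesis by (simp add: sum_distrib_left)
qed

definition multiplicity_lists :: "nat \<Rightarrow> nat list set" where
  "multiplicity_lists s = {as. set as \<subseteq> {1..s} \<and> length as < s}"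

lemma finite_multiplicity_lists: "finite (multiplicity_lists s)"
  by (rule finite_subset[OF _ finite_lists_length_le[of "{1..s}" s]])
    (auto simp: multiplicity_lists_def)

text \<open>Listing a set \<open>\<omega> \<in> Omega_at s n\<close> of size \<open>< s\<close> together with its multiplicities
  \<open>a\<close> exhibits \<open>\<omega>\<close> as a solution of \<open>\<Sum> a\<^sub>j x\<^sub>j = n\<close>.\<close>
lemma small_sets_subset_image:
  "{\<omega> \<in> Omega_at s n. card \<omega> < s} \<subseteq> (\<lambda>(as, xs). set xs) `
     (SIGMA as:multiplicity_lists s. {xs \<in> weighted_compositions as n. distinct xs})"
proof
  fix \<omega> assume \<omega>: "\<omega> \<in> {\<omega> \<in> Omega_at s n. card \<omega> < s}"
  then obtain a where fin: "finite \<omega>" and a: "\<forall>x\<in>\<omega>. 1 \<le> a x"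
    "(\<Sum>x\<in>\<omega>. a x) = s" "(\<Sum>x\<in>\<omega>. a x * x) = n"
    by (auto elim: Omega_atE)
  define xs where "xs = sorted_list_of_set \<omega>"
  have xs: "set xs = \<omega>" "distinct xs" "length xs = card \<omega>" using fin by (auto simp: xs_def)
  have "a x \<le> s" if "x \<in> \<omega>" for x
    using member_le_sum[of x \<omega> a] that fin a(2) by simp
  then have "map a xs \<in> multiplicity_lists s"
    using a xs \<omega> by (auto simp: multiplicity_lists_def)
  moreover have "map2 (*) (map a xs) xs = map (\<lambda>x. a x * x) xs"
    by (induction xs) auto
  then have "xs \<in> weighted_compositions (map a xs) n"
    using xs a by (simp add: weighted_compositions_def sum_list_distinct_conv_sum_set)
  ultimately show "\<omega> \<in> (\<lambda>(as, xs). set xs) `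
      (SIGMA as:multiplicity_lists s. {xs \<in> weighted_compositions as n. distinct xs})"
    using xs by force
qed

lemma sum_small_sets_le_weighted_conv:
  fixes f :: "nat \<Rightarrow> real"
  assumes f_nonneg: "\<And>x. 0 \<le> f x" and f_le_one: "\<And>x. f x \<le> 1"
  shows "(\<Sum>\<omega>\<in>{\<omega> \<in> Omega_at s n. card \<omega> < s}. \<Prod>x\<in>\<omega>. f x)
    \<le> (\<Sum>as\<in>multiplicity_lists s. weighted_conv f as n)"
proof -
  define D where "D = (SIGMA as:multiplicity_lists s. {xs \<in> weighted_compositions as n. distinct xs})"
  have as0: "0 \<notin> set as" if "as \<in> multiplicity_lists s" for as
    using that by (auto simp: multiplicity_lists_def)
  have fin_D: "finite D" unfolding D_def
    using finite_multiplicity_lists as0 finite_weighted_compositions by (intro finite_SigmaI) auto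
  have "(\<Sum>\<omega>\<in>{\<omega> \<in> Omega_at s n. card \<omega> < s}. \<Prod>x\<in>\<omega>. f x)
      \<le> (\<Sum>\<omega>\<in>(\<lambda>(as, xs). set xs) ` D. \<Prod>x\<in>\<omega>. f x)"
    using small_sets_subset_image[of s n, folded D_def] fin_D f_nonneg
    by (intro sum_mono2) (auto intro: prod_nonneg)
  also have "\<dots> \<le> (\<Sum>(as, xs)\<in>D. \<Prod>x\<in>set xs. f x)"
    using sum_image_le[OF fin_D, of "\<lambda>\<omega>. \<Prod>x\<in>\<omega>. f x" "\<lambda>(as, xs). set xs"] f_nonneg
    by (simp add: prod_nonneg case_prod_unfold o_def)
  also have "\<dots> = (\<Sum>as\<in>multiplicity_lists s. \<Sum>xs | xs \<in> weighted_compositions as n \<and> distinct xs.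
                     prod_list (map f xs))"
    unfolding D_def using finite_multiplicity_lists as0 finite_weighted_compositions
    by (subst sum.Sigma) (auto simp: prod.distinct_set_conv_list intro!: sum.cong)
  also have "\<dots> \<le> (\<Sum>as\<in>multiplicity_lists s. weighted_conv f as n)"
  proof (rule sum_mono)
    fix as assume as: "as \<in> multiplicity_lists s"
    have "0 \<le> prod_list (map f xs)" for xs using f_nonneg by (induction xs) auto
    then show "(\<Sum>xs | xs \<in> weighted_compositions as n \<and> distinct xs. prod_list (map f xs))
        \<le> weighted_conv f as n"
      unfolding weighted_conv_eq_sum[OF as0[OF as]]
      using finite_weighted_compositions[OF as0[OF as]] by (intro sum_mono2) auto
  qed
  finally show ?thesis .
qed

lemma incl_prob_nonneg: "0 \<le> incl_prob s n"
  by (simp add: incl_prob_def)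

lemma prob_E_nonneg: "0 \<le> prob_E s \<omega>"
  by (simp add: prob_E_def prod_nonneg incl_prob_nonneg)

lemma incl_prob_zero [simp]: "incl_prob s 0 = 0"
  by (simp add: incl_prob_def)

lemma incl_prob_le: "incl_prob s n \<le> 1 / real s"
proof -
  have "real n powr (-1 + 1 / real s) \<le> 1"
  proof (cases "n = 0")
    case False
    have "-1 + 1 / real s \<le> 0" by (cases s) auto
    then have "real n powr (-1 + 1 / real s) \<le> real n powr 0" using False by (intro powr_mono) auto
    then show ?thesis using False by simp
  qed simp
  then show ?thesis unfolding incl_prob_def by (intro mult_left_le) auto
qed

lemma incl_prob_le_one: "incl_prob s n \<le> 1"
proof -
  have "1 / real s \<le> 1" by (cases s) auto
  then show ?thesis using incl_prob_le[of s n] by linarith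
qed

lemma incl_prob_le_scale:
  assumes "1 \<le> a" "a \<le> s"
  shows "incl_prob s x \<le> real s * incl_prob s (a * x)"
proof -
  let ?e = "-1 + 1 / real s"
  have "1 / real s \<le> 1 / real a" using assms by (simp add: frac_le)
  also have "\<dots> = real a powr (-1)" using assms by (simp add: powr_minus divide_inverse)
  also have "\<dots> \<le> real a powr ?e" using assms by (intro powr_mono) auto
  finally have "1 / real s * incl_prob s x \<le> real a powr ?e * incl_prob s x"
    by (rule mult_right_mono) (rule incl_prob_nonneg)
  also have "\<dots> = incl_prob s (a * x)"
    by (simp add: incl_prob_def powr_mult)
  finally show ?thesis using assms by (simp add: field_simps)
qed

lemma sum_prob_E_small_sets_tendsto_zero:
  assumes "0 < s"
  shows "(\<lambda>n. \<Sum>\<omega>\<in>{\<omega> \<in> Omega_at s n. card \<omega> < s}. prob_E s \<omega>) \<longlonglongrightarrow> 0"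
proof (rule tendsto_sandwich[OF _ _ tendsto_const])
  let ?bound = "\<lambda>n. \<Sum>as\<in>multiplicity_lists s. real s ^ length as * conv_power (incl_prob s) (length as) n"
  show "\<forall>\<^sub>F n in sequentially. 0 \<le> (\<Sum>\<omega>\<in>{\<omega> \<in> Omega_at s n. card \<omega> < s}. prob_E s \<omega>)"
    by (simp add: sum_nonneg prob_E_nonneg)
  have "(\<Sum>\<omega>\<in>{\<omega> \<in> Omega_at s n. card \<omega> < s}. prob_E s \<omega>) \<le> ?bound n" for n
  proof -
    have "(\<Sum>\<omega>\<in>{\<omega> \<in> Omega_at s n. card \<omega> < s}. prob_E s \<omega>)
        \<le> (\<Sum>as\<in>multiplicity_lists s. weighted_conv (incl_prob s) as n)"
      unfolding prob_E_def using incl_prob_nonneg incl_prob_le_one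
      by (rule sum_small_sets_le_weighted_conv)
    also have "\<dots> \<le> ?bound n"
      by (intro sum_mono weighted_conv_le_conv_power incl_prob_nonneg incl_prob_le_scale)
        (auto simp: multiplicity_lists_def)
    finally show ?thesis .
  qed
  then show "\<forall>\<^sub>F n in sequentially. (\<Sum>\<omega>\<in>{\<omega> \<in> Omega_at s n. card \<omega> < s}. prob_E s \<omega>) \<le> ?bound n"
    by simp
  have "?bound \<longlonglongrightarrow> (\<Sum>as\<in>multiplicity_lists s. real s ^ length as * 0)"
    by (intro tendsto_sum tendsto_mult tendsto_const conv_power_incl_prob_tendsto_zero)
      (auto simp: multiplicity_lists_def)
  then show "?bound \<longlonglongrightarrow> 0" by simp
qed

lemma sum_prob_E_distinct_partitions_tendsto:
  assumes "0 < s"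
  shows "(\<lambda>n. \<Sum>\<omega>\<in>distinct_partitions s n. prob_E s \<omega>) \<longlonglongrightarrow> lambda_s s"
proof -
  define nondistinct where "nondistinct n =
    (\<Sum>xs | length xs = s \<and> sum_list xs = n \<and> \<not> distinct xs. prod_list (map (incl_prob s) xs))" for n
  have split: "conv_power (incl_prob s) s n
      = fact s * (\<Sum>\<omega>\<in>distinct_partitions s n. prob_E s \<omega>) + nondistinct n" for n
  proof -
    let ?A = "{xs. length xs = s \<and> sum_list xs = n \<and> distinct xs}"
    let ?B = "{xs. length xs = s \<and> sum_list xs = n \<and> \<not> distinct xs}"
    have "conv_power (incl_prob s) s n = (\<Sum>xs\<in>?A \<union> ?B. prod_list (map (incl_prob s) xs))"
      unfolding conv_power_eq_sum_compositions by (intro sum.cong) auto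
    also have "\<dots> = (\<Sum>xs\<in>?A. prod_list (map (incl_prob s) xs)) + nondistinct n"
      unfolding nondistinct_def
      by (rule sum.union_disjoint) (auto intro: finite_subset[OF _ finite_compositions])
    finally show ?thesis
      unfolding prob_E_def fact_mult_sum_distinct_partitions[of "incl_prob s", OF incl_prob_zero] .
  qed
  have "nondistinct \<longlonglongrightarrow> 0"
  proof (rule tendsto_sandwich[OF _ _ tendsto_const])
    show "\<forall>\<^sub>F n in sequentially. 0 \<le> nondistinct n"
      unfolding nondistinct_def using incl_prob_nonneg
      by (intro always_eventually allI sum_nonneg prod_list_nonneg) auto
    show "\<forall>\<^sub>F n in sequentially. nondistinct n
        \<le> real (s ^ s) * (\<Sum>\<omega>\<in>{\<omega> \<in> Omega_at s n. card \<omega> < s}. prob_E s \<omega>)"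
      unfolding nondistinct_def prob_E_def using incl_prob_nonneg incl_prob_le_one
      by (intro always_eventually allI sum_nondistinct_compositions_le) auto
    show "(\<lambda>n. real (s ^ s) * (\<Sum>\<omega>\<in>{\<omega> \<in> Omega_at s n. card \<omega> < s}. prob_E s \<omega>)) \<longlonglongrightarrow> 0"
      using tendsto_mult[OF tendsto_const sum_prob_E_small_sets_tendsto_zero[OF assms]] by simp
  qed
  then have "(\<lambda>n. (conv_power (incl_prob s) s n - nondistinct n) / fact s)
      \<longlonglongrightarrow> ((Gamma (1 / real s) / real s) ^ s - 0) / fact s"
    by (rule tendsto_divide[OF tendsto_diff[OF conv_power_incl_prob_tendsto[OF assms]] tendsto_const])
      simp_all
  then show ?thesis by (simp add: split lambda_s_def power_divide field_simps)
qed

lemma sum_prob_E_Omega_at_tendsto: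
  assumes "0 < s"
  shows "(\<lambda>n. \<Sum>\<omega>\<in>Omega_at s n. prob_E s \<omega>) \<longlonglongrightarrow> lambda_s s"
proof -
  have "(\<Sum>\<omega>\<in>Omega_at s n. prob_E s \<omega>) = (\<Sum>\<omega>\<in>distinct_partitions s n. prob_E s \<omega>)
      + (\<Sum>\<omega>\<in>{\<omega> \<in> Omega_at s n. card \<omega> < s}. prob_E s \<omega>)" for n
  proof -
    let ?A = "{\<omega> \<in> Omega_at s n. card \<omega> = s}" and ?B = "{\<omega> \<in> Omega_at s n. card \<omega> < s}"
    have "(\<Sum>\<omega>\<in>Omega_at s n. prob_E s \<omega>) = (\<Sum>\<omega>\<in>?A \<union> ?B. prob_E s \<omega>)"
      by (rule sum.cong) (auto dest: Omega_at_card_le)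
    also have "\<dots> = (\<Sum>\<omega>\<in>?A. prob_E s \<omega>) + (\<Sum>\<omega>\<in>?B. prob_E s \<omega>)"
      by (rule sum.union_disjoint) (auto simp: finite_Omega_at)
    finally show ?thesis by (simp only: Omega_at_card_eq)
  qed
  moreover have "(\<lambda>n. (\<Sum>\<omega>\<in>distinct_partitions s n. prob_E s \<omega>)
      + (\<Sum>\<omega>\<in>{\<omega> \<in> Omega_at s n. card \<omega> < s}. prob_E s \<omega>)) \<longlonglongrightarrow> lambda_s s + 0"
    by (intro tendsto_add sum_prob_E_distinct_partitions_tendsto sum_prob_E_small_sets_tendsto_zero assms)
  ultimately show ?thesis by simp
qed

subsection \<open>Integers in the window \<open>I\<^sub>i\<close>\<close>

definition window :: "real \<Rightarrow> nat \<Rightarrow> nat set" where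
  "window \<alpha> i = {n. i \<le> n \<and> real n \<le> real i + \<alpha> * ln (real i)}"

lemma window_eq:
  assumes "0 \<le> \<alpha>" "1 \<le> i"
  shows "window \<alpha> i = {i..i + nat \<lfloor>\<alpha> * ln (real i)\<rfloor>}"
proof -
  have nonneg: "0 \<le> \<alpha> * ln (real i)" using assms by simp
  have "real n \<le> real i + \<alpha> * ln (real i) \<longleftrightarrow> n \<le> i + nat \<lfloor>\<alpha> * ln (real i)\<rfloor>"
    if "i \<le> n" for n
  proof -
    have "real n \<le> real i + \<alpha> * ln (real i) \<longleftrightarrow> real (n - i) \<le> \<alpha> * ln (real i)"
      using that by (simp add: of_nat_diff) linarith
    also have "\<dots> \<longleftrightarrow> int (n - i) \<le> \<lfloor>\<alpha> * ln (real i)\<rfloor>"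
      by (simp add: le_floor_iff)
    also have "\<dots> \<longleftrightarrow> n \<le> i + nat \<lfloor>\<alpha> * ln (real i)\<rfloor>" using nonneg that by linarith
    finally show ?thesis .
  qed
  then show ?thesis unfolding window_def by auto
qed

lemma card_window:
  assumes "0 < \<alpha>" "1 \<le> i"
  shows "finite (window \<alpha> i)" "window \<alpha> i \<noteq> {}"
    "\<alpha> * ln (real i) < real (card (window \<alpha> i))"
    "real (card (window \<alpha> i)) \<le> \<alpha> * ln (real i) + 1"
proof -
  have nonneg: "0 \<le> \<alpha> * ln (real i)" using assms by simp
  have card: "card (window \<alpha> i) = nat \<lfloor>\<alpha> * ln (real i)\<rfloor> + 1"
    using assms by (simp add: window_eq)
  show "finite (window \<alpha> i)" "window \<alpha> i \<noteq> {}" using assms by (auto simp: window_eq)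
  show "\<alpha> * ln (real i) < real (card (window \<alpha> i))"
    "real (card (window \<alpha> i)) \<le> \<alpha> * ln (real i) + 1"
    unfolding card using nonneg by linarith+
qed

lemma card_window_over_ln_tendsto:
  assumes "0 < \<alpha>"
  shows "(\<lambda>i. real (card (window \<alpha> i)) / ln (real i)) \<longlonglongrightarrow> \<alpha>"
proof (rule tendsto_sandwich[OF _ _ tendsto_const])
  show "\<forall>\<^sub>F i in sequentially. \<alpha> \<le> real (card (window \<alpha> i)) / ln (real i)"
    using eventually_ge_at_top[of 2]
  proof eventually_elim
    case (elim i)
    then show ?case using card_window(3)[OF assms, of i] by (simp add: field_simps)
  qed
  show "\<forall>\<^sub>F i in sequentially. real (card (window \<alpha> i)) / ln (real i) \<le> \<alpha> + 1 / ln (real i)"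
    using eventually_ge_at_top[of 2]
  proof eventually_elim
    case (elim i)
    then show ?case using card_window(4)[OF assms, of i] by (simp add: field_simps)
  qed
  have "(\<lambda>i. 1 / ln (real i)) \<longlonglongrightarrow> 0" by real_asymp
  then show "(\<lambda>i. \<alpha> + 1 / ln (real i)) \<longlonglongrightarrow> \<alpha>"
    using tendsto_add[OF tendsto_const, of _ 0 _ \<alpha>] by simp
qed

lemma window_average_tendsto:
  assumes "0 < \<alpha>" and "h \<longlonglongrightarrow> L"
  shows "(\<lambda>i. (\<Sum>n\<in>window \<alpha> i. h n) / real (card (window \<alpha> i))) \<longlonglongrightarrow> L"
proof (rule LIMSEQ_I)
  fix r :: real assume "r > 0"
  then obtain K where K: "\<And>n. K \<le> n \<Longrightarrow> \<bar>h n - L\<bar> < r"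
    using LIMSEQ_D[OF assms(2)] by auto
  show "\<exists>N. \<forall>i\<ge>N. norm ((\<Sum>n\<in>window \<alpha> i. h n) / real (card (window \<alpha> i)) - L) < r"
  proof (intro exI allI impI)
    fix i assume i: "max K 1 \<le> i"
    have fin: "finite (window \<alpha> i)" and ne: "window \<alpha> i \<noteq> {}"
      using card_window[OF assms(1)] i by auto
    have card_pos: "0 < real (card (window \<alpha> i))" using fin ne by (simp add: card_gt_0_iff)
    have "\<bar>\<Sum>n\<in>window \<alpha> i. h n - L\<bar> \<le> (\<Sum>n\<in>window \<alpha> i. \<bar>h n - L\<bar>)" by (rule sum_abs)
    also have "\<dots> < (\<Sum>n\<in>window \<alpha> i. r)"
      using fin ne K i by (intro sum_strict_mono) (auto simp: window_def)
    finally have "\<bar>\<Sum>n\<in>window \<alpha> i. h n - L\<bar> < real (card (window \<alpha> i)) * r" by simp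
    then show "norm ((\<Sum>n\<in>window \<alpha> i. h n) / real (card (window \<alpha> i)) - L) < r"
      using card_pos by (simp add: sum_subtractf abs_div field_simps)
  qed
qed

lemma window_sum_over_ln_tendsto:
  assumes "0 < \<alpha>" and "h \<longlonglongrightarrow> L"
  shows "(\<lambda>i. (\<Sum>n\<in>window \<alpha> i. h n) / ln (real i)) \<longlonglongrightarrow> \<alpha> * L"
proof -
  have "(\<lambda>i. real (card (window \<alpha> i)) / ln (real i)
      * ((\<Sum>n\<in>window \<alpha> i. h n) / real (card (window \<alpha> i)))) \<longlonglongrightarrow> \<alpha> * L"
    by (intro tendsto_mult card_window_over_ln_tendsto window_average_tendsto assms)
  moreover have "\<forall>\<^sub>F i in sequentially. real (card (window \<alpha> i)) / ln (real i)
      * ((\<Sum>n\<in>window \<alpha> i. h n) / real (card (window \<alpha> i))) = (\<Sum>n\<in>window \<alpha> i. h n) / ln (real i)"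
    using eventually_ge_at_top[of 1]
  proof eventually_elim
    case (elim i)
    then show ?case using card_window(1,2)[OF assms(1) elim] by (simp add: card_gt_0_iff)
  qed
  ultimately show ?thesis by (simp add: tendsto_cong)
qed

subsection \<open>The product over \<open>\<Omega>\<^bsub>I\<^sub>i\<^esub>\<close>\<close>

lemma prob_Ec_eq:
  assumes "finite \<omega>"
  shows "prob_Ec s \<omega> = 1 - prob_E s \<omega>"
proof -
  let ?M = "\<lambda>n. measure_pmf (bernoulli_pmf (incl_prob s n))"
  let ?P = "rand_set_space s"
  interpret P: prob_space ?P
    unfolding rand_set_space_def by (intro prob_space_PiM prob_space_measure_pmf)
  define E where "E = prod_emb UNIV ?M \<omega> (\<Pi>\<^sub>E j\<in>\<omega>. {True})"
  have E_sets: "E \<in> P.events"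
    unfolding E_def rand_set_space_def using assms by (intro sets_PiM_I) auto
  have "E = {f. \<omega> \<subseteq> {n. f n}}"
    by (auto simp: E_def prod_emb_def space_PiM PiE_iff restrict_def fun_eq_iff split: if_splits)
  then have "{f \<in> space ?P. \<not> \<omega> \<subseteq> {n. f n}} = space ?P - E"
    by (auto simp: rand_set_space_def space_PiM)
  then have "prob_Ec s \<omega> = 1 - P.prob E"
    unfolding prob_Ec_def using P.prob_compl[OF E_sets] by simp
  moreover have "emeasure ?P E = (\<Prod>x\<in>\<omega>. emeasure (?M x) {True})"
    unfolding E_def rand_set_space_def using assms
    by (intro emeasure_PiM_emb prob_space_measure_pmf) auto
  then have "P.prob E = prob_E s \<omega>"
    by (simp add: measure_def prob_E_def emeasure_pmf_single incl_prob_nonneg incl_prob_le_one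
        prod_ennreal prod_nonneg)
  ultimately show ?thesis by simp
qed

lemma prob_E_Omega_at_le:
  assumes "0 < s" "\<omega> \<in> Omega_at s n" "1 \<le> i" "i \<le> n"
  shows "prob_E s \<omega> \<le> 1 / real s * (real i / real s) powr (-1 + 1 / real s)"
    and "prob_E s \<omega> \<le> 1 / real s"
proof -
  obtain a where fin: "finite \<omega>" and a: "\<forall>x\<in>\<omega>. 1 \<le> a x"
    "(\<Sum>x\<in>\<omega>. a x) = s" "(\<Sum>x\<in>\<omega>. a x * x) = n"
    using assms(2) by (rule Omega_atE)
  have "\<omega> \<noteq> {}" using a(2) assms(1) by auto
  define m where "m = Max \<omega>"
  have m: "m \<in> \<omega>" using fin \<open>\<omega> \<noteq> {}\<close> by (simp add: m_def)
  have "n \<le> (\<Sum>x\<in>\<omega>. a x * m)" unfolding a(3)[symmetric] using fin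
    by (intro sum_mono mult_left_mono) (auto simp: m_def)
  also have "\<dots> = s * m" by (simp add: a(2) flip: sum_distrib_right)
  finally have "real i \<le> real s * real m" using assms(4) by (simp flip: of_nat_mult)
  then have i_le: "real i / real s \<le> real m" using assms(1) by (simp add: divide_le_eq mult.commute)
  have "prob_E s \<omega> = incl_prob s m * (\<Prod>x\<in>\<omega> - {m}. incl_prob s x)"
    unfolding prob_E_def using fin m by (simp add: prod.remove)
  also have "\<dots> \<le> incl_prob s m"
    by (intro mult_right_le_one_le prod_le_1 prod_nonneg) (auto simp: incl_prob_nonneg incl_prob_le_one)
  finally have le_m: "prob_E s \<omega> \<le> incl_prob s m" .
  also have "\<dots> \<le> 1 / real s * (real i / real s) powr (-1 + 1 / real s)"
    unfolding incl_prob_def using i_le assms by (intro mult_left_mono powr_mono2') auto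
  finally show "prob_E s \<omega> \<le> 1 / real s * (real i / real s) powr (-1 + 1 / real s)" .
  show "prob_E s \<omega> \<le> 1 / real s" using le_m incl_prob_le[of s m] by linarith
qed

lemma sum_UNION_le:
  fixes f :: "'a \<Rightarrow> real"
  assumes "finite I" "\<And>i. i \<in> I \<Longrightarrow> finite (A i)" "\<And>x. 0 \<le> f x"
  shows "(\<Sum>x\<in>(\<Union>i\<in>I. A i). f x) \<le> (\<Sum>i\<in>I. \<Sum>x\<in>A i. f x)"
proof -
  have fin: "finite (SIGMA i:I. A i)" using assms(1,2) by (rule finite_SigmaI)
  have "(\<Union>i\<in>I. A i) = snd ` (SIGMA i:I. A i)" by force
  then have "(\<Sum>x\<in>(\<Union>i\<in>I. A i). f x) \<le> (\<Sum>p\<in>(SIGMA i:I. A i). f (snd p))"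
    using sum_image_le[OF fin, of f snd] assms(3) by (simp add: o_def)
  also have "\<dots> = (\<Sum>i\<in>I. \<Sum>x\<in>A i. f x)"
    using assms(1,2) by (subst sum.Sigma) (auto simp: case_prod_unfold)
  finally show ?thesis .
qed

lemma Omega_set_window:
  "Omega_set s {real i .. real i + \<alpha> * ln (real i)} = (\<Union>n\<in>window \<alpha> i. Omega_at s n)"
  unfolding Omega_set_def Omega_at_def window_def by auto

lemma prob_E_Omega_set_le:
  assumes "0 < s" "1 \<le> i" "\<omega> \<in> Omega_set s {real i .. real i + \<alpha> * ln (real i)}"
  shows "prob_E s \<omega> \<le> 1 / real s * (real i / real s) powr (-1 + 1 / real s)"
    and "prob_E s \<omega> \<le> 1 / real s"
  using assms prob_E_Omega_at_le[OF assms(1) _ assms(2)]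
  by (auto simp: Omega_set_window window_def)

lemma sum_prob_E_Omega_set_bounds:
  fixes s i :: nat
  assumes "0 < \<alpha>" "1 \<le> i"
  defines "\<Omega> \<equiv> Omega_set s {real i .. real i + \<alpha> * ln (real i)}"
  shows "(\<Sum>n\<in>window \<alpha> i. \<Sum>\<omega>\<in>distinct_partitions s n. prob_E s \<omega>) \<le> (\<Sum>\<omega>\<in>\<Omega>. prob_E s \<omega>)"
    and "(\<Sum>\<omega>\<in>\<Omega>. prob_E s \<omega>) \<le> (\<Sum>n\<in>window \<alpha> i. \<Sum>\<omega>\<in>Omega_at s n. prob_E s \<omega>)"
proof -
  have fin_window: "finite (window \<alpha> i)" using card_window(1)[OF assms(1,2)] .
  have \<Omega>: "\<Omega> = (\<Union>n\<in>window \<alpha> i. Omega_at s n)" unfolding \<Omega>_def by (rule Omega_set_window)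
  have "(\<Sum>n\<in>window \<alpha> i. \<Sum>\<omega>\<in>distinct_partitions s n. prob_E s \<omega>)
      = (\<Sum>\<omega>\<in>(\<Union>n\<in>window \<alpha> i. distinct_partitions s n). prob_E s \<omega>)"
  proof (rule sum.UNION_disjoint[symmetric])
    show "\<forall>n\<in>window \<alpha> i. finite (distinct_partitions s n)"
      by (simp add: finite_distinct_partitions)
  qed (auto simp: fin_window distinct_partitions_def)
  also have "\<dots> \<le> (\<Sum>\<omega>\<in>\<Omega>. prob_E s \<omega>)"
    unfolding \<Omega> using fin_window finite_Omega_at prob_E_nonneg
    by (intro sum_mono2) (auto simp flip: Omega_at_card_eq)
  finally show "(\<Sum>n\<in>window \<alpha> i. \<Sum>\<omega>\<in>distinct_partitions s n. prob_E s \<omega>) \<le> (\<Sum>\<omega>\<in>\<Omega>. prob_E s \<omega>)" .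
  show "(\<Sum>\<omega>\<in>\<Omega>. prob_E s \<omega>) \<le> (\<Sum>n\<in>window \<alpha> i. \<Sum>\<omega>\<in>Omega_at s n. prob_E s \<omega>)"
    unfolding \<Omega> using fin_window finite_Omega_at prob_E_nonneg by (rule sum_UNION_le)
qed

lemma sum_prob_E_Omega_set_over_ln_tendsto:
  assumes "0 < s" "0 < \<alpha>"
  shows "(\<lambda>i. (\<Sum>\<omega>\<in>Omega_set s {real i .. real i + \<alpha> * ln (real i)}. prob_E s \<omega>) / ln (real i))
    \<longlonglongrightarrow> \<alpha> * lambda_s s"
proof (rule tendsto_sandwich)
  show "(\<lambda>i. (\<Sum>n\<in>window \<alpha> i. \<Sum>\<omega>\<in>distinct_partitions s n. prob_E s \<omega>) / ln (real i))
      \<longlonglongrightarrow> \<alpha> * lambda_s s"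
    by (intro window_sum_over_ln_tendsto sum_prob_E_distinct_partitions_tendsto assms)
  show "(\<lambda>i. (\<Sum>n\<in>window \<alpha> i. \<Sum>\<omega>\<in>Omega_at s n. prob_E s \<omega>) / ln (real i)) \<longlonglongrightarrow> \<alpha> * lambda_s s"
    by (intro window_sum_over_ln_tendsto sum_prob_E_Omega_at_tendsto assms)
  show "\<forall>\<^sub>F i in sequentially. (\<Sum>n\<in>window \<alpha> i. \<Sum>\<omega>\<in>distinct_partitions s n. prob_E s \<omega>) / ln (real i)
      \<le> (\<Sum>\<omega>\<in>Omega_set s {real i .. real i + \<alpha> * ln (real i)}. prob_E s \<omega>) / ln (real i)"
    using eventually_ge_at_top[of 1]
    by eventually_elim (intro divide_right_mono sum_prob_E_Omega_set_bounds(1) assms; simp)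
  show "\<forall>\<^sub>F i in sequentially. (\<Sum>\<omega>\<in>Omega_set s {real i .. real i + \<alpha> * ln (real i)}. prob_E s \<omega>) / ln (real i)
      \<le> (\<Sum>n\<in>window \<alpha> i. \<Sum>\<omega>\<in>Omega_at s n. prob_E s \<omega>) / ln (real i)"
    using eventually_ge_at_top[of 1]
    by eventually_elim (intro divide_right_mono sum_prob_E_Omega_set_bounds(2) assms; simp)
qed

lemma ln_one_minus_bounds:
  fixes q d :: real
  assumes "0 \<le> q" "q \<le> d" "d < 1"
  shows "- q / (1 - d) \<le> ln (1 - q)" and "ln (1 - q) \<le> - q"
proof -
  show "ln (1 - q) \<le> - q" using ln_le_minus_one[of "1 - q"] assms by simp
  have "- ln (1 - q) = ln (1 / (1 - q))" using assms by (simp add: ln_div)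
  also have "\<dots> \<le> 1 / (1 - q) - 1" using assms by (intro ln_le_minus_one) auto
  also have "\<dots> = q / (1 - q)" using assms by (simp add: field_simps)
  also have "\<dots> \<le> q / (1 - d)" using assms by (intro divide_left_mono) auto
  finally show "- q / (1 - d) \<le> ln (1 - q)" by simp
qed

lemma sum_ln_one_minus_tendsto:
  fixes q :: "'a \<Rightarrow> real" and A :: "nat \<Rightarrow> 'a set" and d w :: "nat \<Rightarrow> real"
  assumes bound: "\<forall>\<^sub>F i in sequentially. \<forall>\<omega>\<in>A i. 0 \<le> q \<omega> \<and> q \<omega> \<le> d i"
    and d: "d \<longlonglongrightarrow> 0" and w: "\<forall>\<^sub>F i in sequentially. 0 < w i"
    and lim: "(\<lambda>i. (\<Sum>\<omega>\<in>A i. q \<omega>) / w i) \<longlonglongrightarrow> L"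
  shows "(\<lambda>i. (\<Sum>\<omega>\<in>A i. ln (1 - q \<omega>)) / w i) \<longlonglongrightarrow> - L"
proof (rule tendsto_sandwich)
  have "(\<lambda>i. - ((\<Sum>\<omega>\<in>A i. q \<omega>) / w i) / (1 - d i)) \<longlonglongrightarrow> - L / (1 - 0)"
    by (intro tendsto_divide tendsto_minus tendsto_diff lim d tendsto_const) simp
  then show "(\<lambda>i. - ((\<Sum>\<omega>\<in>A i. q \<omega>) / w i) / (1 - d i)) \<longlonglongrightarrow> - L" by simp
  show "(\<lambda>i. - ((\<Sum>\<omega>\<in>A i. q \<omega>) / w i)) \<longlonglongrightarrow> - L" by (intro tendsto_minus lim)
  have d_lt: "\<forall>\<^sub>F i in sequentially. d i < 1" using d by (rule order_tendstoD) simp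
  with bound w show "\<forall>\<^sub>F i in sequentially.
      - ((\<Sum>\<omega>\<in>A i. q \<omega>) / w i) / (1 - d i) \<le> (\<Sum>\<omega>\<in>A i. ln (1 - q \<omega>)) / w i"
  proof eventually_elim
    case (elim i)
    have "- (\<Sum>\<omega>\<in>A i. q \<omega>) / (1 - d i) \<le> (\<Sum>\<omega>\<in>A i. ln (1 - q \<omega>))"
      unfolding sum_negf[symmetric] sum_divide_distrib
      using elim ln_one_minus_bounds(1) by (intro sum_mono) auto
    then have "- (\<Sum>\<omega>\<in>A i. q \<omega>) / (1 - d i) / w i \<le> (\<Sum>\<omega>\<in>A i. ln (1 - q \<omega>)) / w i"
      using elim by (intro divide_right_mono) auto
    moreover have "- (\<Sum>\<omega>\<in>A i. q \<omega>) / (1 - d i) / w i = - ((\<Sum>\<omega>\<in>A i. q \<omega>) / w i) / (1 - d i)"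
      by (simp add: mult.commute)
    ultimately show ?case by linarith
  qed
  from bound w d_lt show "\<forall>\<^sub>F i in sequentially.
      (\<Sum>\<omega>\<in>A i. ln (1 - q \<omega>)) / w i \<le> - ((\<Sum>\<omega>\<in>A i. q \<omega>) / w i)"
  proof eventually_elim
    case (elim i)
    have "(\<Sum>\<omega>\<in>A i. ln (1 - q \<omega>)) \<le> - (\<Sum>\<omega>\<in>A i. q \<omega>)"
      unfolding sum_negf[symmetric] using elim ln_one_minus_bounds(2) by (intro sum_mono) auto
    then have "(\<Sum>\<omega>\<in>A i. ln (1 - q \<omega>)) / w i \<le> - (\<Sum>\<omega>\<in>A i. q \<omega>) / w i"
      using elim by (intro divide_right_mono) auto
    then show ?case by simp
  qed
qed

lemma incl_prob_bound_tendsto_zero: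
  assumes "1 < s"
  shows "(\<lambda>i. 1 / real s * (real i / real s) powr (-1 + 1 / real s)) \<longlonglongrightarrow> 0"
proof -
  have "filterlim (\<lambda>i. 1 / real s * real i) at_top sequentially"
    using assms by (intro filterlim_tendsto_pos_mult_at_top[OF tendsto_const _ filterlim_real_sequentially]) simp
  then have "(\<lambda>i. 1 / real s * (real i / real s) powr (-1 + 1 / real s)) \<longlonglongrightarrow> 1 / real s * 0"
    using assms by (intro tendsto_mult tendsto_const tendsto_neg_powr) auto
  then show ?thesis by simp
qed

lemma sum_ln_one_minus_prob_E_over_ln_tendsto:
  assumes "2 \<le> s" "0 < \<alpha>"
  shows "(\<lambda>i. (\<Sum>\<omega>\<in>Omega_set s {real i .. real i + \<alpha> * ln (real i)}. ln (1 - prob_E s \<omega>))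
    / ln (real i)) \<longlonglongrightarrow> - (\<alpha> * lambda_s s)"
proof (rule sum_ln_one_minus_tendsto)
  have s: "0 < s" using assms(1) by simp
  show "(\<lambda>i. 1 / real s * (real i / real s) powr (-1 + 1 / real s)) \<longlonglongrightarrow> 0"
    using assms(1) by (intro incl_prob_bound_tendsto_zero) simp
  show "\<forall>\<^sub>F i in sequentially. \<forall>\<omega>\<in>Omega_set s {real i .. real i + \<alpha> * ln (real i)}.
      0 \<le> prob_E s \<omega> \<and> prob_E s \<omega> \<le> 1 / real s * (real i / real s) powr (-1 + 1 / real s)"
    using eventually_ge_at_top[of 1]
    by eventually_elim (use prob_E_Omega_set_le(1)[OF s] prob_E_nonneg in auto)
  show "\<forall>\<^sub>F i in sequentially. 0 < ln (real i)"
    using eventually_ge_at_top[of 2] by eventually_elim simp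
  show "(\<lambda>i. (\<Sum>\<omega>\<in>Omega_set s {real i .. real i + \<alpha> * ln (real i)}. prob_E s \<omega>) / ln (real i))
      \<longlonglongrightarrow> \<alpha> * lambda_s s"
    using s assms(2) by (rule sum_prob_E_Omega_set_over_ln_tendsto)
qed

lemma prod_prob_Ec_Omega_set_eq:
  assumes "2 \<le> s" "0 < \<alpha>" "1 \<le> i"
  defines "\<Omega> \<equiv> Omega_set s {real i .. real i + \<alpha> * ln (real i)}"
  shows "(\<Prod>\<omega>\<in>\<Omega>. prob_Ec s \<omega>) = exp (\<Sum>\<omega>\<in>\<Omega>. ln (1 - prob_E s \<omega>))"
proof -
  have s: "0 < s" and s_inv: "1 / real s < 1" using assms(1) by auto
  have "prob_E s \<omega> < 1" if "\<omega> \<in> \<Omega>" for \<omega>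
    using order.strict_trans1[OF prob_E_Omega_set_le(2)[OF s assms(3) that[unfolded \<Omega>_def]] s_inv] .
  moreover have "prob_Ec s \<omega> = 1 - prob_E s \<omega>" if "\<omega> \<in> \<Omega>" for \<omega>
    using that by (simp add: \<Omega>_def Omega_set_def prob_Ec_eq)
  moreover have "finite \<Omega>"
    using assms(2,3) by (simp add: \<Omega>_def Omega_set_window card_window(1) finite_Omega_at)
  ultimately show ?thesis by (simp add: exp_sum)
qed

theorem lemma5:
  fixes s :: nat and \<alpha> :: real
  assumes "s \<ge> 2" and "\<alpha> > 0"
  shows "\<exists>e :: nat \<Rightarrow> real. e \<longlonglongrightarrow> 0 \<and>
    (\<forall>i\<ge>2. (\<Prod>\<omega>\<in>Omega_set s {real i .. real i + \<alpha> * ln (real i)}. prob_Ec s \<omega>)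
              = real i powr (- \<alpha> * lambda_s s + e i))"
proof -
  define L where "L i = (\<Sum>\<omega>\<in>Omega_set s {real i .. real i + \<alpha> * ln (real i)}. ln (1 - prob_E s \<omega>))"
    for i
  define e where "e i = \<alpha> * lambda_s s + L i / ln (real i)" for i
  have "e \<longlonglongrightarrow> \<alpha> * lambda_s s + - (\<alpha> * lambda_s s)"
    unfolding e_def L_def by (intro tendsto_add tendsto_const sum_ln_one_minus_prob_E_over_ln_tendsto assms)
  moreover have "(\<Prod>\<omega>\<in>Omega_set s {real i .. real i + \<alpha> * ln (real i)}. prob_Ec s \<omega>)
      = real i powr (- \<alpha> * lambda_s s + e i)" if "2 \<le> i" for i
    using that prod_prob_Ec_Omega_set_eq[OF assms, of i] by (simp add: e_def L_def powr_def)
  ultimately show ?thesis by (intro exI[of _ e]) auto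
qed

end
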